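(* Let $\sigma>0$, $\zeta_*\in[0,1]$, $\gamma_*>0$, and $\nu_*=(1-\zeta_* )\delta_0+\zeta_*\delta_{\gamma_*}$. Let $S(0,0)$ be the set of probability distributions $\nu$ on $\mathbb{R}$ with $\nu((0,\infty))=0$. Then \[ \inf_{\nu\in S(0,0)}\|F_\nu-F_{\nu_*}\|_\infty\ \ge\ \zeta_*\left(\Phi_\sigma(\tfrac12\gamma_* )-\Phi_\sigma(-\tfrac12\gamma_* )\right), \] where $\Phi_\sigma$ is the CDF of $\mathcal{N}(0,\sigma^2)$. Furthermore, if $\gamma_*<\sigma$, then \[ \inf_{\nu\in S(0,0)}\|F_\nu-F_{\nu_*}\|_\infty\ \ge\ \frac{23\zeta_*\gamma_*}{24\sigma\sqrt{2\pi}}. \]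
   Context: $\delta_x$ denotes the point mass at $x$. For a probability distribution $\nu$ on $\mathbb{R}$, $F_\nu(t):=\mathbb{P}_{\mu\sim\nu,\,X\sim\mathcal{N}(\mu,\sigma^2)}(X\le t)$, and $\|\cdot\|_\infty$ is the sup norm over $t\in\mathbb{R}$. *)

theory Defs
  imports "HOL-Probability.Probability"
begin

definition Phi :: "real \<Rightarrow> real \<Rightarrow> real" where
  "Phi \<sigma> x = measure (density lborel (normal_density 0 \<sigma>)) {..x}"

text \<open>CDF of the Gaussian location mixture: P(X \<le> t), mu ~ nu, X ~ N(mu, sigma^2).\<close>
definition mixcdf :: "real \<Rightarrow> real measure \<Rightarrow> real \<Rightarrow> real" where
  "mixcdf \<sigma> \<nu> t = (\<integral>\<mu>. Phi \<sigma> (t - \<mu>) \<partial>\<nu>)"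

definition supdist :: "real \<Rightarrow> real measure \<Rightarrow> real measure \<Rightarrow> real" where
  "supdist \<sigma> \<nu> \<nu>' = (SUP t. \<bar>mixcdf \<sigma> \<nu> t - mixcdf \<sigma> \<nu>' t\<bar>)"

definition real_distr :: "real measure \<Rightarrow> bool" where
  "real_distr \<nu> \<longleftrightarrow> prob_space \<nu> \<and> sets \<nu> = sets borel"

definition S00 :: "real measure set" where
  "S00 = {\<nu>. real_distr \<nu> \<and> measure \<nu> {0<..} = 0}"

text \<open>nu_* = (1 - zeta) delta_0 + zeta delta_gamma.\<close>
definition two_point :: "real \<Rightarrow> real \<Rightarrow> real measure" where
  "two_point \<zeta> \<gamma> = measure_pmf (map_pmf (\<lambda>b. if b then \<gamma> else 0) (bernoulli_pmf \<zeta>))"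

end

theory Submission
  imports Defs
begin

text \<open>Every \<open>\<nu> \<in> S00\<close> puts its mass on \<open>(-\<infinity>, 0]\<close>, so its mixture CDF dominates \<open>\<Phi>\<^sub>\<sigma>\<close> pointwise,
  while the CDF of \<open>\<nu>\<^sub>*\<close> at \<open>t\<close> is \<open>\<Phi>\<^sub>\<sigma>(t) - \<zeta>\<^sub>* (\<Phi>\<^sub>\<sigma>(t) - \<Phi>\<^sub>\<sigma>(t - \<gamma>\<^sub>*))\<close>; taking \<open>t = \<gamma>\<^sub>*/2\<close>
  gives the first bound. The second follows from \<open>exp(-x\<^sup>2/(2\<sigma>\<^sup>2)) \<ge> 1 - x\<^sup>2/(2\<sigma>\<^sup>2)\<close>,
  integrated over \<open>[-\<gamma>\<^sub>*/2, \<gamma>\<^sub>*/2]\<close>.\<close>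

lemma Phi_nonneg: "\<sigma> > 0 \<Longrightarrow> 0 \<le> Phi \<sigma> x"
  unfolding Phi_def by simp

lemma Phi_le_1: "\<sigma> > 0 \<Longrightarrow> Phi \<sigma> x \<le> 1"
  unfolding Phi_def using prob_space_normal_density[of \<sigma> 0] by (simp add: prob_space.prob_le_1)

lemma Phi_diff_eq_integral:
  assumes "\<sigma> > 0" "a \<le> b"
  shows "Phi \<sigma> b - Phi \<sigma> a = (\<integral>x. normal_density 0 \<sigma> x * indicator {a<..b} x \<partial>lborel)"
proof -
  let ?N = "density lborel (normal_density 0 \<sigma>)"
  interpret prob_space ?N
    using prob_space_normal_density assms(1) by blast
  have "Phi \<sigma> b - Phi \<sigma> a = measure ?N ({..b} - {..a})"
    unfolding Phi_def using assms by (subst finite_measure_Diff) auto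
  also have "{..b} - {..a} = {a<..b}" by auto
  also have "measure ?N {a<..b} = integral\<^sup>L ?N (indicator {a<..b})" by simp
  also have "\<dots> = (\<integral>x. normal_density 0 \<sigma> x *\<^sub>R indicator {a<..b} x \<partial>lborel)"
    by (rule integral_density) (auto simp: normal_density_nonneg)
  finally show ?thesis by simp
qed

lemma Phi_mono:
  assumes "\<sigma> > 0" "a \<le> b"
  shows "Phi \<sigma> a \<le> Phi \<sigma> b"
proof -
  have "0 \<le> (\<integral>x. normal_density 0 \<sigma> x * indicator {a<..b} x \<partial>lborel)"
    by (rule integral_nonneg_AE) (auto simp: normal_density_nonneg)
  then show ?thesis using Phi_diff_eq_integral[OF assms] by linarith
qed

lemma borel_measurable_Phi: "\<sigma> > 0 \<Longrightarrow> Phi \<sigma> \<in> borel_measurable borel"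
  by (rule borel_measurable_mono) (auto simp: mono_def Phi_mono)

lemma Phi_diff_ge_cubic:
  assumes "\<sigma> > 0" "a \<le> b"
  shows "Phi \<sigma> b - Phi \<sigma> a \<ge> ((b - a) - (b ^ 3 - a ^ 3) / (6 * \<sigma>\<^sup>2)) / (\<sigma> * sqrt (2 * pi))"
proof -
  define c where "c = 1 / (\<sigma> * sqrt (2 * pi))"
  define g where "g x = c * (1 - x\<^sup>2 / (2 * \<sigma>\<^sup>2))" for x
  define G where "G x = c * (x - x ^ 3 / (6 * \<sigma>\<^sup>2))" for x
  have c_pos: "c > 0" unfolding c_def using assms by simp
  have g_le_density: "g x \<le> normal_density 0 \<sigma> x" for x
  proof -
    have "1 - x\<^sup>2 / (2 * \<sigma>\<^sup>2) \<le> exp (- (x - 0)\<^sup>2 / (2 * \<sigma>\<^sup>2))"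
      using exp_ge_add_one_self[of "- (x - 0)\<^sup>2 / (2 * \<sigma>\<^sup>2)"] by simp
    moreover have "normal_density 0 \<sigma> x = c * exp (- (x - 0)\<^sup>2 / (2 * \<sigma>\<^sup>2))"
      unfolding normal_density_def c_def using assms by (simp add: real_sqrt_mult)
    ultimately show ?thesis unfolding g_def using c_pos by simp
  qed
  have G_deriv: "(G has_vector_derivative g x) (at x within {a..b})" for x
    unfolding G_def g_def has_real_derivative_iff_has_vector_derivative[symmetric]
    using assms by (auto intro!: derivative_eq_intros simp: field_simps power2_eq_square)
  have g_integrable: "integrable lborel (\<lambda>x. indicator {a..b} x *\<^sub>R g x)"
  proof -
    have "isCont g x" for x unfolding g_def using assms by (intro continuous_intros) auto
    then show ?thesis using borel_integrable_atLeastAtMost[of a b g] by (simp add: mult.commute)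
  qed
  have density_integrable: "integrable lborel (\<lambda>x. normal_density 0 \<sigma> x * indicator {a<..b} x)"
    using assms by (intro integrable_real_mult_indicator integrable_normal_density) auto
  have "((b - a) - (b ^ 3 - a ^ 3) / (6 * \<sigma>\<^sup>2)) / (\<sigma> * sqrt (2 * pi)) = G b - G a"
    unfolding G_def c_def by (simp add: diff_divide_distrib)
  also have "\<dots> = (\<integral>x. indicator {a..b} x *\<^sub>R g x \<partial>lborel)"
    using assms by (intro integral_FTC_atLeastAtMost[symmetric, OF assms(2) G_deriv])
      (auto simp: g_def intro!: continuous_intros)
  also have "\<dots> \<le> (\<integral>x. normal_density 0 \<sigma> x * indicator {a<..b} x \<partial>lborel)"
  proof (rule integral_mono_AE[OF g_integrable density_integrable])
    show "AE x in lborel. indicator {a..b} x *\<^sub>R g x \<le> normal_density 0 \<sigma> x * indicator {a<..b} x"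
      using AE_lborel_singleton[of a]
      by eventually_elim (use g_le_density in \<open>auto split: split_indicator\<close>)
  qed
  also have "\<dots> = Phi \<sigma> b - Phi \<sigma> a" using Phi_diff_eq_integral[OF assms] by simp
  finally show ?thesis .
qed

lemma Phi_central_mass_ge:
  assumes "0 < \<gamma>" "\<gamma> < \<sigma>"
  shows "Phi \<sigma> (\<gamma> / 2) - Phi \<sigma> (- \<gamma> / 2) \<ge> 23 * \<gamma> / (24 * \<sigma> * sqrt (2 * pi))"
proof -
  have "\<gamma> ^ 3 \<le> \<gamma> * \<sigma>\<^sup>2"
    using assms by (simp add: power3_eq_cube power2_eq_square mult_mono less_imp_le)
  then have "23 * \<gamma> / 24 \<le> (\<gamma> / 2 - - \<gamma> / 2) - ((\<gamma> / 2) ^ 3 - (- \<gamma> / 2) ^ 3) / (6 * \<sigma>\<^sup>2)"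
    using assms by (simp add: field_simps power3_eq_cube)
  then have "23 * \<gamma> / 24 / (\<sigma> * sqrt (2 * pi))
      \<le> ((\<gamma> / 2 - - \<gamma> / 2) - ((\<gamma> / 2) ^ 3 - (- \<gamma> / 2) ^ 3) / (6 * \<sigma>\<^sup>2)) / (\<sigma> * sqrt (2 * pi))"
    using assms by (intro divide_right_mono) auto
  also have "\<dots> \<le> Phi \<sigma> (\<gamma> / 2) - Phi \<sigma> (- \<gamma> / 2)"
    using assms by (intro Phi_diff_ge_cubic) auto
  finally show ?thesis by (simp add: field_simps)
qed

lemma mixcdf_nonneg: "\<sigma> > 0 \<Longrightarrow> 0 \<le> mixcdf \<sigma> \<nu> t"
  unfolding mixcdf_def by (rule integral_nonneg_AE) (simp add: Phi_nonneg)

lemma mixcdf_le_1: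
  assumes "\<sigma> > 0" "prob_space \<nu>"
  shows "mixcdf \<sigma> \<nu> t \<le> 1"
proof -
  interpret prob_space \<nu> by fact
  show ?thesis
  proof (cases "integrable \<nu> (\<lambda>\<mu>. Phi \<sigma> (t - \<mu>))")
    case True
    then have "mixcdf \<sigma> \<nu> t \<le> (\<integral>\<mu>. 1 \<partial>\<nu>)"
      unfolding mixcdf_def by (rule integral_mono) (simp_all add: Phi_le_1 assms(1))
    then show ?thesis by (simp add: prob_space)
  next
    case False
    then show ?thesis unfolding mixcdf_def by (simp add: not_integrable_integral_eq)
  qed
qed

lemma Phi_le_mixcdf_if_AE_nonpos:
  assumes "\<sigma> > 0" "real_distr \<nu>" and nonpos: "AE \<mu> in \<nu>. \<mu> \<le> 0"
  shows "Phi \<sigma> t \<le> mixcdf \<sigma> \<nu> t"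
proof -
  interpret prob_space \<nu> using assms(2) unfolding real_distr_def by simp
  have "(\<lambda>\<mu>. Phi \<sigma> (t - \<mu>)) \<in> borel_measurable borel"
    using borel_measurable_Phi[OF assms(1)] by measurable
  then have measurable: "(\<lambda>\<mu>. Phi \<sigma> (t - \<mu>)) \<in> borel_measurable \<nu>"
    using assms(2) unfolding real_distr_def by (simp cong: measurable_cong_sets)
  have integrable: "integrable \<nu> (\<lambda>\<mu>. Phi \<sigma> (t - \<mu>))"
    by (intro integrable_const_bound[where B = 1] measurable)
      (simp add: Phi_nonneg Phi_le_1 assms(1))
  have "Phi \<sigma> t = (\<integral>\<mu>. Phi \<sigma> t \<partial>\<nu>)" by (simp add: prob_space)
  also have "\<dots> \<le> mixcdf \<sigma> \<nu> t"
    unfolding mixcdf_def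
  proof (rule integral_mono_AE[OF _ integrable])
    show "AE \<mu> in \<nu>. Phi \<sigma> t \<le> Phi \<sigma> (t - \<mu>)"
      using nonpos by eventually_elim (simp add: Phi_mono assms(1))
  qed simp
  finally show ?thesis .
qed

lemma S00_AE_nonpos:
  assumes "\<nu> \<in> S00"
  shows "AE \<mu> in \<nu>. \<mu> \<le> 0"
proof (rule AE_I')
  interpret prob_space \<nu> using assms unfolding S00_def real_distr_def by simp
  show "{0<..} \<in> null_sets \<nu>"
    using assms unfolding S00_def real_distr_def by (simp add: null_sets_def emeasure_eq_measure)
qed auto

lemma mixcdf_two_point:
  assumes "0 \<le> \<zeta>" "\<zeta> \<le> 1"
  shows "mixcdf \<sigma> (two_point \<zeta> \<gamma>) t = \<zeta> * Phi \<sigma> (t - \<gamma>) + (1 - \<zeta>) * Phi \<sigma> t"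
  unfolding mixcdf_def two_point_def using assms by simp

lemma prob_space_two_point: "prob_space (two_point \<zeta> \<gamma>)"
  unfolding two_point_def by (rule prob_space_measure_pmf)

lemma supdist_ge:
  assumes "\<sigma> > 0" "prob_space \<nu>" "prob_space \<nu>'"
  shows "\<bar>mixcdf \<sigma> \<nu> t - mixcdf \<sigma> \<nu>' t\<bar> \<le> supdist \<sigma> \<nu> \<nu>'"
  unfolding supdist_def
proof (rule cSUP_upper)
  have "\<bar>mixcdf \<sigma> \<nu> s - mixcdf \<sigma> \<nu>' s\<bar> \<le> 1" for s
    using mixcdf_nonneg[OF assms(1), of \<nu> s] mixcdf_nonneg[OF assms(1), of \<nu>' s]
      mixcdf_le_1[OF assms(1,2), of s] mixcdf_le_1[OF assms(1,3), of s]
    unfolding abs_le_iff by linarith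
  then show "bdd_above (range (\<lambda>s. \<bar>mixcdf \<sigma> \<nu> s - mixcdf \<sigma> \<nu>' s\<bar>))"
    by (rule bdd_aboveI2)
qed simp

lemma supdist_S00_two_point_ge:
  assumes "\<sigma> > 0" "0 \<le> \<zeta>" "\<zeta> \<le> 1" "\<nu> \<in> S00"
  shows "\<zeta> * (Phi \<sigma> t - Phi \<sigma> (t - \<gamma>)) \<le> supdist \<sigma> \<nu> (two_point \<zeta> \<gamma>)"
proof -
  have \<nu>: "real_distr \<nu>" using assms(4) unfolding S00_def by simp
  have "\<zeta> * (Phi \<sigma> t - Phi \<sigma> (t - \<gamma>)) = Phi \<sigma> t - mixcdf \<sigma> (two_point \<zeta> \<gamma>) t"
    using mixcdf_two_point[OF assms(2,3)] by (simp add: algebra_simps)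
  also have "\<dots> \<le> \<bar>mixcdf \<sigma> \<nu> t - mixcdf \<sigma> (two_point \<zeta> \<gamma>) t\<bar>"
    using Phi_le_mixcdf_if_AE_nonpos[OF assms(1) \<nu> S00_AE_nonpos[OF assms(4)], of t]
    by (simp add: abs_if)
  also have "\<dots> \<le> supdist \<sigma> \<nu> (two_point \<zeta> \<gamma>)"
    using supdist_ge[OF assms(1) _ prob_space_two_point] \<nu> unfolding real_distr_def by simp
  finally show ?thesis .
qed

lemma S00_nonempty: "S00 \<noteq> {}"
proof -
  have "return borel (0 :: real) \<in> S00"
    unfolding S00_def real_distr_def by (simp add: prob_space_return measure_return)
  then show ?thesis by blast
qed

theorem lemma2:
  fixes \<sigma> \<zeta> \<gamma> :: real
  assumes "\<sigma> > 0" and "0 \<le> \<zeta>" and "\<zeta> \<le> 1" and "\<gamma> > 0"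
  shows "(INF \<nu>\<in>S00. supdist \<sigma> \<nu> (two_point \<zeta> \<gamma>))
           \<ge> \<zeta> * (Phi \<sigma> (\<gamma> / 2) - Phi \<sigma> (- \<gamma> / 2))
         \<and> (\<gamma> < \<sigma> \<longrightarrow> (INF \<nu>\<in>S00. supdist \<sigma> \<nu> (two_point \<zeta> \<gamma>))
           \<ge> 23 * \<zeta> * \<gamma> / (24 * \<sigma> * sqrt (2 * pi)))"
proof -
  have "\<zeta> * (Phi \<sigma> (\<gamma> / 2) - Phi \<sigma> (- \<gamma> / 2))
                 \<le> (INF \<nu>\<in>S00. supdist \<sigma> \<nu> (two_point \<zeta> \<gamma>))"
    using supdist_S00_two_point_ge[OF assms(1-3), of _ "\<gamma> / 2" \<gamma>]
    by (intro cINF_greatest[OF S00_nonempty]) simp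
  moreover have "23 * \<zeta> * \<gamma> / (24 * \<sigma> * sqrt (2 * pi)) \<le> \<zeta> * (Phi \<sigma> (\<gamma> / 2) - Phi \<sigma> (- \<gamma> / 2))"
    if "\<gamma> < \<sigma>"
    using mult_left_mono[OF Phi_central_mass_ge[OF assms(4) that] assms(2)] by simp
  ultimately show ?thesis by auto
qed

end
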